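(* Let $f:[0,\infty)\to[0,\infty)$ be continuously differentiable with $f>0$ on $[t_0,\infty)$ for some $t_0\ge0$ and $f\in C^2([t_0,\infty))$, let $g=\log f$ on $[t_0,\infty)$, and assume condition (H1) of the context with $q>1$ (and corresponding $p$). Let $(s_n),(t_n)\subset(0,\infty)$ and $x\in[0,1]$ satisfy $s_n<t_n$ for all $n$, $s_n\to\infty$ and $s_n/t_n\to x$. Then $$\lim_{n\to\infty}\frac{g(s_n)}{g(t_n)}=x^p=\lim_{n\to\infty}\left(\frac{g'(s_n)}{g'(t_n)}\right)^q.$$
   Context: Condition (H1): (i) $g'(t)>0$ and $g''(t)>0$ for all $t\ge t_0$, and there is a pair $(q,p)$ with either $q=1$ and $p\in(0,\infty]$, or $q\in(1,\infty)$ and $p\in(0,\infty)$, such that $\lim_{t\to\infty}\frac{g'(t)^2}{g(t)g''(t)}=q$ and $\lim_{t\to\infty}\frac{tg'(t)}{g(t)}=p$; (ii) if $q=1$, then $tg'(t)/g(t)$ is nondecreasing on $[t_0,\infty)$ and there exist $k\in\mathbb{N}$ and $\hat g\in C^2([t_0,\infty))$ with $f=\exp_k\circ\hat g$ and $\hat g'/\hat g$ nonincreasing on $[t_0,\infty)$. *)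

theory Defs
  imports "HOL-Analysis.Analysis"
begin

end

theory Submission imports Defs begin

text \<open>
  If \<open>y h'(y) / h(y) \<rightarrow> r > 0\<close>, then the Cauchy mean value theorem applied to \<open>ln \<circ> h\<close> and \<open>ln\<close>
  gives \<open>h(s\<^sub>n) / h(t\<^sub>n) = (s\<^sub>n / t\<^sub>n)\<^bsup>R\<^sub>n\<^esup>\<close> with \<open>R\<^sub>n = \<xi> h'(\<xi>) / h(\<xi>)\<close> at some
  \<open>\<xi> \<in> (s\<^sub>n, t\<^sub>n)\<close>, so \<open>R\<^sub>n \<rightarrow> r\<close> and the ratio tends to \<open>x\<^sup>r\<close>.
  Under (H1) the function \<open>g = ln f\<close> has this property with \<open>r = p\<close>, and \<open>g'\<close> has it with
  \<open>r = p / q\<close>, because \<open>y g''/g' = (y g'/g) / (g'\<^sup>2/(g g''))\<close>; raising the second ratio to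
  the power \<open>q\<close> gives \<open>x\<^sup>p\<close> again. Only the derivatives \<open>g1\<close>, \<open>g2\<close> of \<open>ln f\<close> enter
  the argument.
\<close>

lemma ratio_eq_powr_mean_value:
  fixes h h' :: "real \<Rightarrow> real" and a b :: real
  assumes der: "\<And>y. a \<le> y \<Longrightarrow> y \<le> b \<Longrightarrow> (h has_real_derivative h' y) (at y)"
    and pos: "\<And>y. a \<le> y \<Longrightarrow> y \<le> b \<Longrightarrow> h y > 0"
    and ab: "0 < a" "a < b"
  shows "\<exists>c. a < c \<and> c < b \<and> h a / h b = (a / b) powr (c * h' c / h c)"
proof -
  have ln_h_der: "((\<lambda>u. ln (h u)) has_real_derivative h' y / h y) (at y)"
    if "a \<le> y" "y \<le> b" for y
    using der[OF that] pos[OF that] by (auto intro!: derivative_eq_intros simp: field_simps)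
  have "\<exists>c. a < c \<and> c < b \<and> (ln (h b) - ln (h a)) * (1 / c) = (ln b - ln a) * (h' c / h c)"
  proof (rule GMVT'[OF \<open>a < b\<close>])
    fix z assume "a \<le> z" "z \<le> b"
    then show "isCont (\<lambda>u. ln (h u)) z" "isCont ln z"
      using DERIV_isCont[OF ln_h_der] ab by (auto intro!: continuous_intros)
  next
    fix z assume "a < z" "z < b"
    then show "(ln has_real_derivative 1 / z) (at z)"
      "((\<lambda>u. ln (h u)) has_real_derivative h' z / h z) (at z)"
      using ln_h_der ab by (auto intro!: derivative_eq_intros)
  qed
  then obtain c where c: "a < c" "c < b"
    and mvt: "(ln (h b) - ln (h a)) * (1 / c) = (ln b - ln a) * (h' c / h c)"
    by blast
  define R where "R = c * h' c / h c"
  have "ln (h b) - ln (h a) = R * (ln b - ln a)"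
    using mvt c ab by (simp add: R_def field_simps)
  then have ln_ratio: "ln (h a / h b) = R * ln (a / b)"
    using ab pos[of a] pos[of b] by (simp add: ln_div algebra_simps)
  have "h a / h b = exp (ln (h a / h b))"
    using pos[of a] pos[of b] ab by simp
  also have "\<dots> = (a / b) powr R"
    using ln_ratio ab by (simp add: powr_def mult.commute)
  finally show ?thesis
    using c unfolding R_def by blast
qed

lemma tendsto_ratio_powr_index:
  fixes h h' :: "real \<Rightarrow> real" and T r x :: real and s t :: "nat \<Rightarrow> real"
  assumes der: "\<And>y. y > T \<Longrightarrow> (h has_real_derivative h' y) (at y)"
    and pos: "\<And>y. y > T \<Longrightarrow> h y > 0"
    and index: "((\<lambda>y. y * h' y / h y) \<longlongrightarrow> r) at_top" and "r > 0"
    and st: "\<And>n. s n < t n"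
    and s_inf: "filterlim s at_top sequentially"
    and ratio: "(\<lambda>n. s n / t n) \<longlonglongrightarrow> x"
  shows "(\<lambda>n. h (s n) / h (t n)) \<longlonglongrightarrow> x powr r"
proof -
  define R where "R y = y * h' y / h y" for y
  have "\<exists>c. max T 0 < s n \<longrightarrow> s n < c \<and> c < t n \<and> h (s n) / h (t n) = (s n / t n) powr R c"
    for n
    using ratio_eq_powr_mean_value[of "s n" "t n" h h'] der pos st[of n]
    unfolding R_def by fastforce
  then obtain \<xi> where \<xi>: "\<And>n. max T 0 < s n \<Longrightarrow>
      s n < \<xi> n \<and> \<xi> n < t n \<and> h (s n) / h (t n) = (s n / t n) powr R (\<xi> n)"
    by metis
  have s_large: "eventually (\<lambda>n. max T 0 < s n) sequentially"
    using s_inf unfolding filterlim_at_top_dense by blast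
  have "filterlim \<xi> at_top sequentially"
    by (rule filterlim_at_top_mono[OF s_inf])
      (use s_large \<xi> in \<open>auto elim!: eventually_mono intro: less_imp_le\<close>)
  then have "(\<lambda>n. R (\<xi> n)) \<longlonglongrightarrow> r"
    using filterlim_compose[OF index] unfolding R_def by blast
  moreover have "eventually (\<lambda>n. s n / t n \<ge> 0) sequentially"
    using s_large by eventually_elim (use st in \<open>force intro: divide_nonneg_pos dual_order.strict_trans\<close>)
  ultimately have "(\<lambda>n. (s n / t n) powr R (\<xi> n)) \<longlonglongrightarrow> x powr r"
    using \<open>r > 0\<close> by (intro tendsto_powr' ratio) auto
  then show ?thesis
    by (rule Lim_transform_eventually) (use s_large \<xi> in \<open>auto elim!: eventually_mono\<close>)
qed

lemma eventually_denominator_pos: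
  fixes u v :: "'a \<Rightarrow> real"
  assumes "((\<lambda>y. u y / v y) \<longlongrightarrow> c) F" "c > 0" "eventually (\<lambda>y. u y > 0) F"
  shows "eventually (\<lambda>y. v y > 0) F"
proof -
  have "eventually (\<lambda>y. u y / v y > 0) F"
    using assms(1,2) by (rule order_tendstoD)
  with assms(3) show ?thesis
    by eventually_elim (auto simp: zero_less_divide_iff)
qed

lemma tendsto_index_derivative:
  fixes g g' g'' :: "real \<Rightarrow> real"
  assumes index: "((\<lambda>y. y * g' y / g y) \<longlongrightarrow> p) at_top"
    and quotient: "((\<lambda>y. (g' y)\<^sup>2 / (g y * g'' y)) \<longlongrightarrow> q) at_top"
    and "q \<noteq> 0"
    and nonzero: "eventually (\<lambda>y. g y \<noteq> 0 \<and> g' y \<noteq> 0 \<and> g'' y \<noteq> 0) at_top"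
  shows "((\<lambda>y. y * g'' y / g' y) \<longlongrightarrow> p / q) at_top"
proof (rule Lim_transform_eventually)
  show "((\<lambda>y. (y * g' y / g y) / ((g' y)\<^sup>2 / (g y * g'' y))) \<longlongrightarrow> p / q) at_top"
    using \<open>q \<noteq> 0\<close> by (intro tendsto_divide index quotient)
  show "eventually (\<lambda>y. (y * g' y / g y) / ((g' y)\<^sup>2 / (g y * g'' y)) = y * g'' y / g' y) at_top"
    using nonzero by eventually_elim (simp add: field_simps power2_eq_square)
qed

theorem lemma2p8:
  fixes f f' f'' g1 g2 :: "real \<Rightarrow> real"
    and t0 p q x :: real and s t :: "nat \<Rightarrow> real"
  assumes t0: "t0 \<ge> 0"
    and f_nonneg: "\<forall>y\<ge>0. f y \<ge> 0"
    and f_C1: "\<forall>y\<ge>0. (f has_real_derivative f' y) (at y within {0..})"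
    and f'_cont: "continuous_on {0..} f'"
    and f_pos: "\<forall>y\<ge>t0. f y > 0"
    and f_C2: "\<forall>y\<ge>t0. (f' has_real_derivative f'' y) (at y within {t0..})"
    and f''_cont: "continuous_on {t0..} f''"
    and g1: "\<forall>y\<ge>t0. ((\<lambda>u. ln (f u)) has_real_derivative g1 y) (at y within {t0..})"
    and g2: "\<forall>y\<ge>t0. (g1 has_real_derivative g2 y) (at y within {t0..})"
    and H1_pos: "\<forall>y\<ge>t0. g1 y > 0 \<and> g2 y > 0"
    and q: "q > 1" and p: "p > 0"
    and H1_q: "((\<lambda>y. (g1 y)\<^sup>2 / (ln (f y) * g2 y)) \<longlongrightarrow> q) at_top"
    and H1_p: "((\<lambda>y. y * g1 y / ln (f y)) \<longlongrightarrow> p) at_top"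
    and s_pos: "\<forall>n. s n > 0" and t_pos: "\<forall>n. t n > 0"
    and st: "\<forall>n. s n < t n"
    and s_inf: "filterlim s at_top sequentially"
    and x: "x \<in> {0..1}"
    and ratio: "(\<lambda>n. s n / t n) \<longlonglongrightarrow> x"
  shows "(\<lambda>n. ln (f (s n)) / ln (f (t n))) \<longlonglongrightarrow> x powr p
       \<and> (\<lambda>n. (g1 (s n) / g1 (t n)) powr q) \<longlonglongrightarrow> x powr p"
proof -
  have g_der: "((\<lambda>u. ln (f u)) has_real_derivative g1 y) (at y)"
    and g1_der: "(g1 has_real_derivative g2 y) (at y)" if "y > t0" for y
  proof -
    have "at y within {t0..} = at y"
      using that by (intro at_within_interior) auto
    then show "((\<lambda>u. ln (f u)) has_real_derivative g1 y) (at y)" "(g1 has_real_derivative g2 y) (at y)"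
      using g1[rule_format, of y] g2[rule_format, of y] that by simp_all
  qed
  have "eventually (\<lambda>y. ln (f y) > 0) at_top"
    by (rule eventually_denominator_pos[OF H1_p p])
      (use eventually_gt_at_top[of "max t0 0"] H1_pos in \<open>auto elim!: eventually_mono\<close>)
  then have large: "eventually (\<lambda>y. y > t0 \<and> ln (f y) > 0 \<and> g1 y > 0 \<and> g2 y > 0) at_top"
    using eventually_gt_at_top[of t0] by eventually_elim (use H1_pos in auto)
  then obtain T where T: "\<And>y. y > T \<Longrightarrow> y > t0 \<and> ln (f y) > 0 \<and> g1 y > 0 \<and> g2 y > 0"
    unfolding eventually_at_top_dense by blast
  have ratio_g: "(\<lambda>n. ln (f (s n)) / ln (f (t n))) \<longlonglongrightarrow> x powr p"
    using st s_inf ratio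
    by (intro tendsto_ratio_powr_index[where T = T, OF _ _ H1_p p] g_der) (auto dest: T)
  have index_g1: "((\<lambda>y. y * g2 y / g1 y) \<longlongrightarrow> p / q) at_top"
    using q large by (intro tendsto_index_derivative[OF H1_p H1_q]) (auto elim!: eventually_mono)
  have "(\<lambda>n. g1 (s n) / g1 (t n)) \<longlonglongrightarrow> x powr (p / q)"
    using p q st s_inf ratio
    by (intro tendsto_ratio_powr_index[where T = T, OF _ _ index_g1] g1_der) (auto dest: T)
  moreover have "eventually (\<lambda>n. g1 (s n) / g1 (t n) \<ge> 0) sequentially"
    using s_inf[unfolded filterlim_at_top_dense, rule_format, of t0]
  proof eventually_elim
    case (elim n)
    then show ?case
      using st[rule_format, of n] H1_pos[rule_format, of "s n"] H1_pos[rule_format, of "t n"]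
      by simp
  qed
  ultimately have "(\<lambda>n. (g1 (s n) / g1 (t n)) powr q) \<longlonglongrightarrow> (x powr (p / q)) powr q"
    using q by (intro tendsto_powr') auto
  with ratio_g q show ?thesis
    by (simp add: powr_powr)
qed

end
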